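(* Let $G=(V,E)$ be a finite simple undirected graph and let $v\in V$. Suppose $v$ is unique under anonymity-cascade with $\ell=1$, i.e., there exists a node $u\in V$ adjacent to $v$ such that (i) no node $x\in V\setminus\{u\}$ is $1$-equivalent to $u$, and (ii) no node $v'\in V(N_1(u))\setminus\{u,v\}$ is $1$-equivalent to $v$. Then $v$ is unique under $2$-$k$-anonymity, i.e., no node $w\in V\setminus\{v\}$ is $2$-equivalent to $v$.
   Context: For nodes $v,w$, the distance $d(v,w)$ is the minimum number of edges on a path from $v$ to $w$ ($\infty$ if none). For $d\ge 0$ and $v\in V$, the $d$-neighborhood $N_d(v)$ is the subgraph of $G$ induced by all nodes at distance at most $d$ from $v$ (so $N_1(v)$ is the ego network of $v$, including $v$). A graph isomorphism between $H=(V_H,E_H)$ and $H'=(V_{H'},E_{H'})$ is a bijection $\phi:V_H\to V_{H'}$ with $\{\phi(a),\phi(b)\}\in E_{H'}$ iff $\{a,b\}\in E_H$. Two nodes $v,w\in V$ are $d$-equivalent if there is an isomorphism $\phi$ from $N_d(v)$ to $N_d(w)$ with $\phi(v)=w$. A node is unique under $d$-$k$-anonymity if it is $d$-equivalent to no other node of $G$. *)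

theory Defs
  imports Main "HOL-Library.Extended_Nat"
begin

definition simple_graph :: "'a set \<Rightarrow> ('a \<Rightarrow> 'a \<Rightarrow> bool) \<Rightarrow> bool" where
  "simple_graph V E \<longleftrightarrow> finite V \<and> (\<forall>x y. E x y \<longrightarrow> x \<in> V \<and> y \<in> V)
     \<and> (\<forall>x y. E x y \<longrightarrow> E y x) \<and> (\<forall>x. \<not> E x x)"

definition is_walk :: "'a set \<Rightarrow> ('a \<Rightarrow> 'a \<Rightarrow> bool) \<Rightarrow> 'a list \<Rightarrow> 'a \<Rightarrow> 'a \<Rightarrow> bool" where
  "is_walk V E p v w \<longleftrightarrow> p \<noteq> [] \<and> hd p = v \<and> last p = w \<and> set p \<subseteq> V
     \<and> (\<forall>i. Suc i < length p \<longrightarrow> E (p ! i) (p ! Suc i))"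

definition gdist :: "'a set \<Rightarrow> ('a \<Rightarrow> 'a \<Rightarrow> bool) \<Rightarrow> 'a \<Rightarrow> 'a \<Rightarrow> enat" where
  "gdist V E v w = Inf {enat (length p - 1) | p. is_walk V E p v w}"

definition nbhd :: "'a set \<Rightarrow> ('a \<Rightarrow> 'a \<Rightarrow> bool) \<Rightarrow> nat \<Rightarrow> 'a \<Rightarrow> 'a set" where
  "nbhd V E d v = {x \<in> V. gdist V E v x \<le> enat d}"

definition d_equiv :: "'a set \<Rightarrow> ('a \<Rightarrow> 'a \<Rightarrow> bool) \<Rightarrow> nat \<Rightarrow> 'a \<Rightarrow> 'a \<Rightarrow> bool" where
  "d_equiv V E d v w \<longleftrightarrow> (\<exists>\<phi>. bij_betw \<phi> (nbhd V E d v) (nbhd V E d w)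
     \<and> (\<forall>a\<in>nbhd V E d v. \<forall>b\<in>nbhd V E d v. E (\<phi> a) (\<phi> b) \<longleftrightarrow> E a b)
     \<and> \<phi> v = w)"

end

(* An isomorphism \<phi> from N_2(w) onto N_2(v) with \<phi> w = v restricts to an isomorphism
   N_1(c) \<rightarrow> N_1(\<phi> c) for c = w and for every neighbour c of w, because both 1-neighbourhoods
   lie inside the 2-neighbourhoods. Pulling u back along \<phi> gives a neighbour u' of w that is
   1-equivalent to u, so u' = u by (i); then w is a neighbour of u other than u and v that is
   1-equivalent to v, contradicting (ii). *)
theory Submission
  imports Defs
begin

lemma is_walk_iff_successively:
  "is_walk V E p x y \<longleftrightarrow>
     p \<noteq> [] \<and> hd p = x \<and> last p = y \<and> set p \<subseteq> V \<and> successively E p"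
  unfolding is_walk_def successively_conv_nth ..

lemma is_walk_append:
  assumes "is_walk V E p x y" "is_walk V E q y z"
  shows "is_walk V E (p @ tl q) x z"
proof (cases "tl q")
  case Nil
  with assms show ?thesis
    by (cases q) (auto simp: is_walk_iff_successively)
next
  case (Cons b q')
  then have "q = y # b # q'"
    using assms(2) by (cases q) (auto simp: is_walk_iff_successively)
  with assms show ?thesis
    by (auto simp: is_walk_iff_successively successively_append_iff)
qed

lemma mem_nbhd_iff_walk:
  "y \<in> nbhd V E d x \<longleftrightarrow> (\<exists>p. is_walk V E p x y \<and> length p \<le> Suc d)"
proof -
  have "gdist V E x y \<le> enat d \<longleftrightarrow> gdist V E x y < enat (Suc d)"
    by (cases "gdist V E x y") auto
  also have "\<dots> \<longleftrightarrow> (\<exists>p. is_walk V E p x y \<and> length p \<le> Suc d)"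
    unfolding gdist_def Inf_less_iff is_walk_def by auto
  finally show ?thesis
    unfolding nbhd_def is_walk_def by auto
qed

lemma self_mem_nbhd: "x \<in> V \<Longrightarrow> x \<in> nbhd V E d x"
  unfolding mem_nbhd_iff_walk by (rule exI[of _ "[x]"]) (simp add: is_walk_def)

lemma nbhd_subset_nbhd_add:
  assumes "c \<in> nbhd V E d a"
  shows "nbhd V E e c \<subseteq> nbhd V E (d + e) a"
proof
  fix z assume "z \<in> nbhd V E e c"
  then obtain q where q: "is_walk V E q c z" "length q \<le> Suc e"
    unfolding mem_nbhd_iff_walk by blast
  obtain p where p: "is_walk V E p a c" "length p \<le> Suc d"
    using assms unfolding mem_nbhd_iff_walk by blast
  have "is_walk V E (p @ tl q) a z"
    using is_walk_append[OF p(1) q(1)] .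
  moreover have "length (p @ tl q) \<le> Suc (d + e)"
    using p(2) q(2) by simp
  ultimately show "z \<in> nbhd V E (d + e) a"
    unfolding mem_nbhd_iff_walk by blast
qed

lemma nbhd_1_eq:
  assumes "simple_graph V E" "x \<in> V"
  shows "nbhd V E 1 x = insert x {y. E x y}"
proof (intro subset_antisym subsetI)
  fix y assume "y \<in> nbhd V E 1 x"
  then obtain p where p: "is_walk V E p x y" "length p \<le> 2"
    unfolding mem_nbhd_iff_walk by auto
  then consider a where "p = [a]" | a b where "p = [a, b]"
    unfolding is_walk_def by (cases p; cases "tl p") auto
  then show "y \<in> insert x {y. E x y}"
    using p(1) by cases (auto simp: is_walk_iff_successively)
next
  fix y assume "y \<in> insert x {y. E x y}"
  then have "is_walk V E [x, y] x y \<or> y = x"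
    using assms unfolding simple_graph_def is_walk_iff_successively by auto
  then show "y \<in> nbhd V E 1 x"
    using self_mem_nbhd[OF assms(2)] unfolding mem_nbhd_iff_walk by force
qed

lemma nbhd_memD: "y \<in> nbhd V E d x \<Longrightarrow> x \<in> V \<and> y \<in> V"
proof -
  assume "y \<in> nbhd V E d x"
  then obtain p where "p \<noteq> []" "hd p = x" "last p = y" "set p \<subseteq> V"
    unfolding mem_nbhd_iff_walk is_walk_def by blast
  then show ?thesis
    using hd_in_set last_in_set by blast
qed

lemma nbhd_mono: "d \<le> e \<Longrightarrow> nbhd V E d x \<subseteq> nbhd V E e x"
  unfolding nbhd_def using order_trans[of _ "enat d" "enat e"] by auto

definition induced_iso :: "('a \<Rightarrow> 'a \<Rightarrow> bool) \<Rightarrow> ('a \<Rightarrow> 'a) \<Rightarrow> 'a set \<Rightarrow> 'a set \<Rightarrow> bool" where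
  "induced_iso E \<phi> A B \<longleftrightarrow> bij_betw \<phi> A B \<and> (\<forall>a\<in>A. \<forall>b\<in>A. E (\<phi> a) (\<phi> b) \<longleftrightarrow> E a b)"

lemma induced_iso_image: "induced_iso E \<phi> A B \<Longrightarrow> \<phi> ` A = B"
  unfolding induced_iso_def bij_betw_def by blast

lemma induced_iso_adj:
  "induced_iso E \<phi> A B \<Longrightarrow> a \<in> A \<Longrightarrow> b \<in> A \<Longrightarrow> E (\<phi> a) (\<phi> b) \<longleftrightarrow> E a b"
  unfolding induced_iso_def by blast

lemma d_equiv_iff_induced_iso:
  "d_equiv V E d v w \<longleftrightarrow> (\<exists>\<phi>. induced_iso E \<phi> (nbhd V E d v) (nbhd V E d w) \<and> \<phi> v = w)"
  unfolding d_equiv_def induced_iso_def by blast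

lemma induced_iso_restrict:
  assumes "induced_iso E \<phi> A B" "A' \<subseteq> A" "\<phi> ` A' = B'"
  shows "induced_iso E \<phi> A' B'"
  using assms bij_betw_subset unfolding induced_iso_def by blast

lemma induced_iso_d_equiv_1:
  assumes G: "simple_graph V E" and iso: "induced_iso E \<phi> A B"
    and "c \<in> V" "\<phi> c \<in> V"
    and A: "nbhd V E 1 c \<subseteq> A" and B: "nbhd V E 1 (\<phi> c) \<subseteq> B"
  shows "d_equiv V E 1 c (\<phi> c)"
proof -
  have N1c: "nbhd V E 1 c = insert c {y. E c y}"
    and N1\<phi>c: "nbhd V E 1 (\<phi> c) = insert (\<phi> c) {y. E (\<phi> c) y}"
    using nbhd_1_eq[OF G] assms(3,4) by blast+
  have bij: "bij_betw \<phi> A B" and adj: "\<forall>a\<in>A. \<forall>b\<in>A. E (\<phi> a) (\<phi> b) \<longleftrightarrow> E a b"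
    using iso unfolding induced_iso_def by blast+
  have "c \<in> A"
    using A N1c by blast
  have "\<phi> ` nbhd V E 1 c = nbhd V E 1 (\<phi> c)"
  proof (intro subset_antisym subsetI)
    fix y assume "y \<in> \<phi> ` nbhd V E 1 c"
    then show "y \<in> nbhd V E 1 (\<phi> c)"
      using adj A \<open>c \<in> A\<close> unfolding N1c N1\<phi>c by blast
  next
    fix y assume y: "y \<in> nbhd V E 1 (\<phi> c)"
    then obtain x where "x \<in> A" "y = \<phi> x"
      using B bij unfolding bij_betw_def by blast
    moreover from this have "x = c \<or> E c x"
      using y adj \<open>c \<in> A\<close> bij unfolding N1\<phi>c bij_betw_def inj_on_def by blast
    ultimately show "y \<in> \<phi> ` nbhd V E 1 c"
      unfolding N1c by blast
  qed
  then show ?thesis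
    unfolding d_equiv_iff_induced_iso using induced_iso_restrict[OF iso A] by blast
qed

lemma d_equiv_1_of_d_equiv_2_iso:
  assumes G: "simple_graph V E"
    and iso: "induced_iso E \<phi> (nbhd V E 2 w) (nbhd V E 2 v)" and "\<phi> w = v"
    and c: "c \<in> nbhd V E 1 w"
  shows "d_equiv V E 1 c (\<phi> c)"
proof (rule induced_iso_d_equiv_1[OF G iso])
  from nbhd_memD[OF c] have "w \<in> V" "c \<in> V"
    by blast+
  then show "c \<in> V" by blast
  have c2: "c \<in> nbhd V E 2 w"
    by (rule subsetD[OF nbhd_mono c]) simp
  have "\<phi> c \<in> nbhd V E 2 v"
    unfolding induced_iso_image[OF iso, symmetric] using c2 by (rule imageI)
  from nbhd_memD[OF this] have "v \<in> V" "\<phi> c \<in> V"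
    by blast+
  then show "\<phi> c \<in> V" by blast
  show "nbhd V E 1 c \<subseteq> nbhd V E 2 w"
    using nbhd_subset_nbhd_add[OF c, of 1, unfolded one_add_one] .
  have "c = w \<or> E w c"
    using c nbhd_1_eq[OF G \<open>w \<in> V\<close>] by blast
  then have "\<phi> c = v \<or> E v (\<phi> c)"
    using induced_iso_adj[OF iso self_mem_nbhd[OF \<open>w \<in> V\<close>] c2] \<open>\<phi> w = v\<close> by blast
  then have "\<phi> c \<in> nbhd V E 1 v"
    using nbhd_1_eq[OF G \<open>v \<in> V\<close>] by blast
  then show "nbhd V E 1 (\<phi> c) \<subseteq> nbhd V E 2 v"
    by (rule nbhd_subset_nbhd_add[where d = 1 and e = 1, unfolded one_add_one])
qed

theorem theorem1:
  fixes V :: "'a set" and E :: "'a \<Rightarrow> 'a \<Rightarrow> bool" and v u :: 'a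
  assumes "simple_graph V E"
    and "v \<in> V"
    and "u \<in> V" and "E u v"
    and "\<forall>x \<in> V - {u}. \<not> d_equiv V E 1 x u"
    and "\<forall>v' \<in> nbhd V E 1 u - {u, v}. \<not> d_equiv V E 1 v' v"
  shows "\<forall>w \<in> V - {v}. \<not> d_equiv V E 2 w v"
proof (intro ballI notI)
  fix w assume w: "w \<in> V - {v}" and "d_equiv V E 2 w v"
  then obtain \<phi> where iso: "induced_iso E \<phi> (nbhd V E 2 w) (nbhd V E 2 v)" and "\<phi> w = v"
    unfolding d_equiv_iff_induced_iso by blast
  have "E v u" "E w u \<longleftrightarrow> E u w" "u \<noteq> v"
    using assms(1,4) unfolding simple_graph_def by blast+
  then have "u \<in> nbhd V E 1 v"
    using nbhd_1_eq[OF assms(1,2)] by blast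
  then have "u \<in> nbhd V E 2 v"
    by (rule subsetD[OF nbhd_mono, rotated]) simp
  then obtain u' where u': "u' \<in> nbhd V E 2 w" "\<phi> u' = u"
    unfolding induced_iso_image[OF iso, symmetric] by blast
  have "w \<in> nbhd V E 2 w"
    using w by (simp add: self_mem_nbhd)
  then have "E w u'"
    using induced_iso_adj[OF iso _ u'(1)] \<open>\<phi> w = v\<close> u'(2) \<open>E v u\<close> by blast
  then have "u' \<in> nbhd V E 1 w" "w \<in> nbhd V E 1 w"
    using nbhd_1_eq[OF assms(1)] w by auto
  then have "d_equiv V E 1 u' u" and "d_equiv V E 1 w v"
    using d_equiv_1_of_d_equiv_2_iso[OF assms(1) iso \<open>\<phi> w = v\<close>] u'(2) \<open>\<phi> w = v\<close> by metis+
  have "u' = u"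
    using assms(5) \<open>d_equiv V E 1 u' u\<close> nbhd_memD[OF u'(1)] by blast
  have "w \<in> nbhd V E 1 u - {u, v}"
    using \<open>E w u'\<close> \<open>u' = u\<close> \<open>E w u \<longleftrightarrow> E u w\<close> u'(2) \<open>\<phi> w = v\<close> \<open>u \<noteq> v\<close> w
    unfolding nbhd_1_eq[OF assms(1,3)] by auto
  then show False
    using assms(6) \<open>d_equiv V E 1 w v\<close> by blast
qed

end
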